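(* For every positive integer $k$, every graph $G\in\mathcal{G}_k$ is connected and cubic and satisfies $\alpha(G)=6k$ and $\mathrm{diss}(G)=10k$.
   Context: All graphs are finite; $\alpha(G)$ is the independence number; a set $D$ of vertices is a dissociation set if the induced subgraph $G[D]$ has maximum degree at most $1$, and $\mathrm{diss}(G)$ is the maximum order of a dissociation set. Let $K_4^*$ be the graph obtained from $K_4$ with vertices $a,b,c,d$ by subdividing the edge $ab$ twice, i.e. replacing $ab$ by a path $a\,x\,y\,b$ with new vertices $x,y$ (the subdivision vertices). For a positive integer $k$, $\mathcal{H}_k$ is the set of all connected multigraphs $H$ (parallel edges allowed, no loops) of maximum degree at most $3$ such that: (i) $3n_1+2n_2+n_3=6k$, where $n_i$ is the number of vertices of degree $i$ (degree = number of incident edges); (ii) $H$ has an induced matching $M$ with $|M|=k$ covering all vertices of degree $1$; (iii) $H-M$ has an orientation in which every vertex of $H$ not incident with an edge of $M$ has exactly two outgoing edges. $\mathcal{G}_k$ is the set of all graphs $G$ obtained from some $H\in\mathcal{H}_k$ by replacing each vertex $w$ of $H$ by a gadget $G_w$ with designated attachment vertices, one per edge of $H$ at $w$, and replacing each edge $ww'$ of $H$ by an edge joining the attachment vertex of $G_w$ assigned to this edge with the attachment vertex of $G_{w'}$ assigned to this edge (distinct edges of $H$ use distinct attachment vertices). The gadgets are: if $\deg_H(w)=3$, $G_w$ is a triangle and each of its three vertices is the attachment vertex for one of the three edges at $w$; if $\deg_H(w)=2$, $G_w$ is a copy of $K_4^*$ whose two subdivision vertices $x,y$ are the attachment vertices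 for the two edges at $w$; if $\deg_H(w)=1$, $G_w$ is one of the following two graphs on $9$ vertices $z,a_1,a_2,p_1,q_1,r_1,p_2,q_2,r_2$, with $z$ the attachment vertex: both have edges $za_1$, $za_2$, the triangles $p_1q_1r_1$ and $p_2q_2r_2$, and the edge $r_1r_2$; the first additionally has edges $a_1p_1,a_1q_1,a_2p_2,a_2q_2$, the second additionally has edges $a_1p_1,a_1q_2,a_2p_2,a_2q_1$. *)

theory Defs
  imports Main
begin

definition g_connected :: "'a set \<Rightarrow> ('a \<Rightarrow> 'a \<Rightarrow> bool) \<Rightarrow> bool" where
  "g_connected V adj \<longleftrightarrow> V \<noteq> {} \<and>
     (\<forall>u\<in>V. \<forall>v\<in>V. (\<lambda>x y. x \<in> V \<and> y \<in> V \<and> adj x y)\<^sup>*\<^sup>* u v)"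

definition g_cubic :: "'a set \<Rightarrow> ('a \<Rightarrow> 'a \<Rightarrow> bool) \<Rightarrow> bool" where
  "g_cubic V adj \<longleftrightarrow> (\<forall>v\<in>V. card {u\<in>V. adj v u} = 3)"

definition independent_set :: "'a set \<Rightarrow> ('a \<Rightarrow> 'a \<Rightarrow> bool) \<Rightarrow> 'a set \<Rightarrow> bool" where
  "independent_set V adj S \<longleftrightarrow> S \<subseteq> V \<and> (\<forall>u\<in>S. \<forall>v\<in>S. \<not> adj u v)"

definition alpha :: "'a set \<Rightarrow> ('a \<Rightarrow> 'a \<Rightarrow> bool) \<Rightarrow> nat" where
  "alpha V adj = Max {card S | S. independent_set V adj S}"

definition dissociation_set :: "'a set \<Rightarrow> ('a \<Rightarrow> 'a \<Rightarrow> bool) \<Rightarrow> 'a set \<Rightarrow> bool" where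
  "dissociation_set V adj S \<longleftrightarrow> S \<subseteq> V \<and> (\<forall>v\<in>S. card {u\<in>S. adj v u} \<le> 1)"

definition diss :: "'a set \<Rightarrow> ('a \<Rightarrow> 'a \<Rightarrow> bool) \<Rightarrow> nat" where
  "diss V adj = Max {card S | S. dissociation_set V adj S}"

definition mdeg :: "'e set \<Rightarrow> ('e \<Rightarrow> 'v set) \<Rightarrow> 'v \<Rightarrow> nat" where
  "mdeg E ends v = card {e\<in>E. v \<in> ends e}"

definition multigraph :: "'v set \<Rightarrow> 'e set \<Rightarrow> ('e \<Rightarrow> 'v set) \<Rightarrow> bool" where
  "multigraph V E ends \<longleftrightarrow> finite V \<and> finite E \<and> (\<forall>e\<in>E. ends e \<subseteq> V \<and> card (ends e) = 2)"

definition m_connected :: "'v set \<Rightarrow> 'e set \<Rightarrow> ('e \<Rightarrow> 'v set) \<Rightarrow> bool" where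
  "m_connected V E ends \<longleftrightarrow> V \<noteq> {} \<and>
     (\<forall>u\<in>V. \<forall>v\<in>V. (\<lambda>x y. \<exists>e\<in>E. ends e = {x, y})\<^sup>*\<^sup>* u v)"

definition ncount :: "'v set \<Rightarrow> 'e set \<Rightarrow> ('e \<Rightarrow> 'v set) \<Rightarrow> nat \<Rightarrow> nat" where
  "ncount V E ends i = card {v\<in>V. mdeg E ends v = i}"

definition induced_matching :: "'e set \<Rightarrow> ('e \<Rightarrow> 'v set) \<Rightarrow> 'e set \<Rightarrow> bool" where
  "induced_matching E ends M \<longleftrightarrow> M \<subseteq> E \<and>
     (\<forall>e\<in>M. \<forall>e'\<in>M. e \<noteq> e' \<longrightarrow> ends e \<inter> ends e' = {}) \<and>
     (\<forall>e\<in>E. ends e \<subseteq> \<Union>(ends ` M) \<longrightarrow> e \<in> M)"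

definition in_Hk :: "nat \<Rightarrow> 'v set \<Rightarrow> 'e set \<Rightarrow> ('e \<Rightarrow> 'v set) \<Rightarrow> bool" where
  "in_Hk k V E ends \<longleftrightarrow>
     multigraph V E ends \<and> m_connected V E ends \<and>
     (\<forall>v\<in>V. mdeg E ends v \<le> 3) \<and>
     3 * ncount V E ends 1 + 2 * ncount V E ends 2 + ncount V E ends 3 = 6 * k \<and>
     (\<exists>M. induced_matching E ends M \<and> card M = k \<and>
        (\<forall>v\<in>V. mdeg E ends v = 1 \<longrightarrow> v \<in> \<Union>(ends ` M)) \<and>
        (\<exists>tl :: 'e \<Rightarrow> 'v. (\<forall>e\<in>E - M. tl e \<in> ends e) \<and>
           (\<forall>v\<in>V - \<Union>(ends ` M). card {e\<in>E - M. tl e = v} = 2)))"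

text \<open>Degree 3: triangle on 0,1,2.
  Degree 2: K4* with a=0, b=1, c=2, d=3, x=4, y=5.
  Degree 1: z=0, a1=1, a2=2, p1=3, q1=4, r1=5, p2=6, q2=7, r2=8;
  the boolean selects the first (True) or the second (False) gadget.\<close>

definition gadget_verts :: "nat \<Rightarrow> nat set" where
  "gadget_verts d = (if d = 3 then {0,1,2} else if d = 2 then {0..5}
                     else if d = 1 then {0..8} else {})"

definition attach_verts :: "nat \<Rightarrow> nat set" where
  "attach_verts d = (if d = 3 then {0,1,2} else if d = 2 then {4,5}
                     else if d = 1 then {0} else {})"

definition gadget_edge_list :: "nat \<Rightarrow> bool \<Rightarrow> (nat \<times> nat) list" where
  "gadget_edge_list d t =
    (if d = 3 then [(0,1),(1,2),(0,2)]
     else if d = 2 then [(0,2),(0,3),(1,2),(1,3),(2,3),(0,4),(4,5),(5,1)]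
     else if d = 1 then
       [(0,1),(0,2),(3,4),(4,5),(3,5),(6,7),(7,8),(6,8),(5,8)] @
       (if t then [(1,3),(1,4),(2,6),(2,7)] else [(1,3),(1,7),(2,6),(2,4)])
     else [])"

definition gadget_adj :: "nat \<Rightarrow> bool \<Rightarrow> nat \<Rightarrow> nat \<Rightarrow> bool" where
  "gadget_adj d t i j \<longleftrightarrow> (i, j) \<in> set (gadget_edge_list d t) \<or> (j, i) \<in> set (gadget_edge_list d t)"

text \<open>att w assigns to each edge of H at w its attachment vertex in the gadget of w.\<close>
definition valid_attach :: "'v set \<Rightarrow> 'e set \<Rightarrow> ('e \<Rightarrow> 'v set) \<Rightarrow> ('v \<Rightarrow> 'e \<Rightarrow> nat) \<Rightarrow> bool" where
  "valid_attach V E ends att \<longleftrightarrow>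
     (\<forall>w\<in>V. bij_betw (att w) {e\<in>E. w \<in> ends e} (attach_verts (mdeg E ends w)))"

definition GV :: "'v set \<Rightarrow> 'e set \<Rightarrow> ('e \<Rightarrow> 'v set) \<Rightarrow> ('v \<times> nat) set" where
  "GV V E ends = {(w, i). w \<in> V \<and> i \<in> gadget_verts (mdeg E ends w)}"

definition GA :: "'v set \<Rightarrow> 'e set \<Rightarrow> ('e \<Rightarrow> 'v set) \<Rightarrow> ('v \<Rightarrow> 'e \<Rightarrow> nat) \<Rightarrow> ('v \<Rightarrow> bool)
                  \<Rightarrow> 'v \<times> nat \<Rightarrow> 'v \<times> nat \<Rightarrow> bool" where
  "GA V E ends att gtype p q \<longleftrightarrow>
     (fst p = fst q \<and> gadget_adj (mdeg E ends (fst p)) (gtype (fst p)) (snd p) (snd q)) \<or>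
     (\<exists>e\<in>E. ends e = {fst p, fst q} \<and> fst p \<noteq> fst q \<and>
            att (fst p) e = snd p \<and> att (fst q) e = snd q)"

end

theory Submission
  imports Defs
begin

text \<open>The gadget of a vertex \<open>w\<close> of degree \<open>d\<close> has \<open>d\<close> attachment vertices and is cubic
  otherwise, so \<open>G\<close> is cubic, and it is connected since \<open>H\<close> and the gadgets are.
  An independent set meets this gadget in at most \<open>4 - d\<close> vertices, and summing
  \<open>4 - d\<close> over \<open>H\<close> gives \<open>3n\<^sub>1 + 2n\<^sub>2 + n\<^sub>3 = 6k\<close>. For a dissociation set \<open>S\<close>, give every
  attachment vertex the charge \<open>-1\<close> if it is not in \<open>S\<close>, \<open>0\<close> if it and its neighbour
  across the edge of \<open>H\<close> are both in \<open>S\<close>, and \<open>1\<close> otherwise. A finite check shows that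
  \<open>S\<close> has at most \<open>(5(4 - d) + charges)/3\<close> vertices in the gadget, and the two charges
  on an edge of \<open>H\<close> sum to at most \<open>0\<close>, so \<open>3|S| \<le> 30k\<close>.

  Both bounds are attained thanks to the orientation of \<open>H - M\<close>: a triangle contributes the
  attachment vertex of an edge entering it, and a dissociation set is formed by a core of
  each gadget together with the attachment vertex of the matching edge at a matched vertex
  and those of the two outgoing edges at every other vertex. The degree condition forces the
  matched vertices to have out-degree \<open>0\<close>, which makes both constructions valid.\<close>

lemma Max_card_eqI:
  assumes "finite A" "\<And>S. P S \<Longrightarrow> S \<subseteq> A" "P S\<^sub>0" "card S\<^sub>0 = m" "\<And>S. P S \<Longrightarrow> card S \<le> m"
  shows "Max {card S | S. P S} = m"
proof (rule Max_eqI)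
  have "{card S | S. P S} \<subseteq> {..card A}"
    using assms(1,2) card_mono by fastforce
  then show "finite {card S | S. P S}"
    using finite_subset by blast
qed (use assms(3-) in auto)

section \<open>Gadgets\<close>

definition gadget_labels :: "nat list" where
  "gadget_labels = [0, 1, 2, 3, 4, 5, 6, 7, 8]"

definition gadget_nbrs :: "nat \<Rightarrow> bool \<Rightarrow> nat \<Rightarrow> nat list" where
  "gadget_nbrs d t i = map snd (filter (\<lambda>p. fst p = i) (gadget_edge_list d t))
                      @ map fst (filter (\<lambda>p. snd p = i) (gadget_edge_list d t))"

lemma gadget_adj_iff_nbrs: "gadget_adj d t i j \<longleftrightarrow> j \<in> set (gadget_nbrs d t i)"
  by (force simp: gadget_adj_def gadget_nbrs_def image_iff)

lemma Collect_gadget_adj: "{j\<in>Y. gadget_adj d t i j} = Y \<inter> set (gadget_nbrs d t i)"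
  by (auto simp: gadget_adj_iff_nbrs)

lemma gadget_adj_sym: "gadget_adj d t i j \<Longrightarrow> gadget_adj d t j i"
  by (auto simp: gadget_adj_def)

lemma gadget_adj_irrefl: "\<not> gadget_adj d t i i"
  by (cases t) (auto simp: gadget_adj_def gadget_edge_list_def)

lemma gadget_adj_in_verts: "gadget_adj d t i j \<Longrightarrow> i \<in> gadget_verts d \<and> j \<in> gadget_verts d"
  by (cases t) (auto simp: gadget_adj_def gadget_edge_list_def gadget_verts_def split: if_splits)

lemma attach_verts_subset: "attach_verts d \<subseteq> gadget_verts d"
  by (auto simp: attach_verts_def gadget_verts_def)

lemma gadget_verts_subset_labels: "gadget_verts d \<subseteq> set gadget_labels"
  by (auto simp: gadget_verts_def gadget_labels_def)

lemma finite_gadget_verts: "finite (gadget_verts d)"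
  using gadget_verts_subset_labels by (rule finite_subset) simp

lemma zero_in_gadget_verts: "d \<in> {1,2,3} \<Longrightarrow> 0 \<in> gadget_verts d"
  by (auto simp: gadget_verts_def)

lemma distinct_gadget_nbrs: "d \<in> {1,2,3} \<Longrightarrow> i \<in> gadget_verts d \<Longrightarrow> distinct (gadget_nbrs d t i)"
  by (cases t; elim insertE; auto simp: gadget_nbrs_def gadget_edge_list_def gadget_verts_def)

lemma gadget_degree:
  "d \<in> {1,2,3} \<Longrightarrow> i \<in> gadget_verts d \<Longrightarrow> length (gadget_nbrs d t i) + of_bool (i \<in> attach_verts d) = 3"
  by (cases t; elim insertE; auto simp: gadget_nbrs_def gadget_edge_list_def gadget_verts_def attach_verts_def)

lemma rtranclp_of_successively:
  "successively R (x # xs) \<Longrightarrow> y \<in> set (x # xs) \<Longrightarrow> R\<^sup>*\<^sup>* x y"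
proof (induction xs arbitrary: x)
  case (Cons z xs)
  then show ?case
    by (auto intro: converse_rtranclp_into_rtranclp)
qed simp

lemma gadget_connected:
  assumes "d \<in> {1,2,3}" "i \<in> gadget_verts d"
  shows "(gadget_adj d t)\<^sup>*\<^sup>* 0 i"
proof -
  obtain walk where "successively (gadget_adj d t) (0 # walk)" "set (0 # walk) = gadget_verts d"
  proof -
    from assms(1) consider "d = 1" | "d = 2" | "d = 3" by blast
    then show thesis
    proof cases
      case 1
      then show thesis
        by (intro that[of "[1,3,4,5,8,7,6,2]"]; cases t) (auto simp: gadget_adj_def gadget_edge_list_def gadget_verts_def)
    next
      case 2
      then show thesis
        by (intro that[of "[4,5,1,2,3]"]) (auto simp: gadget_adj_def gadget_edge_list_def gadget_verts_def)
    next
      case 3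
      then show thesis
        by (intro that[of "[1,2]"]) (auto simp: gadget_adj_def gadget_edge_list_def gadget_verts_def)
    qed
  qed
  then show ?thesis
    using assms(2) by (metis rtranclp_of_successively)
qed

text \<open>Two finite checks, on the characteristic function \<open>b\<close> of a set of vertices of a gadget
  and \<open>x\<close> of a set of its attachment vertices.\<close>

lemma gadget_independent_bound:
  fixes b :: "nat \<Rightarrow> bool"
  assumes "d \<in> {1,2,3}"
    and "\<forall>i\<in>set gadget_labels. i \<notin> gadget_verts d \<longrightarrow> \<not> b i"
    and "\<forall>(i, j)\<in>set (gadget_edge_list d t). \<not> (b i \<and> b j)"
  shows "(\<Sum>i\<leftarrow>gadget_labels. of_bool (b i)) \<le> 4 - int d"
proof -
  from assms(1) consider "d = 1" | "d = 2" | "d = 3" by blast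
  then show ?thesis
    using assms(2-) by cases (cases t; simp add: gadget_labels_def gadget_edge_list_def gadget_verts_def;
      unfold of_bool_def; smt)+
qed

lemma gadget_dissociation_bound:
  fixes b x :: "nat \<Rightarrow> bool"
  assumes "d \<in> {1,2,3}"
    and "\<forall>i\<in>set gadget_labels. i \<notin> gadget_verts d \<longrightarrow> \<not> b i"
    and "\<forall>i\<in>set gadget_labels. i \<notin> attach_verts d \<longrightarrow> \<not> x i"
    and "\<forall>i\<in>set gadget_labels. b i \<longrightarrow> (\<Sum>j\<leftarrow>gadget_nbrs d t i. of_bool (b j)) + of_bool (x i) \<le> (1::int)"
  shows "3 * (\<Sum>i\<leftarrow>gadget_labels. of_bool (b i))
    \<le> 5 * (4 - int d) + (\<Sum>i\<in>attach_verts d. 2 * of_bool (b i) - of_bool (b i \<and> x i) - 1)"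
proof -
  from assms(1) consider "d = 1" | "d = 2" | "d = 3" by blast
  then show ?thesis
    using assms(2-) by cases (cases t; simp add: gadget_labels_def gadget_nbrs_def gadget_edge_list_def
      gadget_verts_def attach_verts_def; unfold of_bool_def; smt)+
qed

lemma of_nat_card_Int_set:
  "distinct xs \<Longrightarrow> of_nat (card (S \<inter> set xs)) = (\<Sum>i\<leftarrow>xs. of_bool (i \<in> S) :: 'a::semiring_1)"
  by (simp add: sum_list_distinct_conv_sum_set Int_commute flip: Int_def)

lemma of_nat_card_gadget_subset:
  "S \<subseteq> gadget_verts d \<Longrightarrow> of_nat (card S) = (\<Sum>i\<leftarrow>gadget_labels. of_bool (i \<in> S) :: 'a::semiring_1)"
  using of_nat_card_Int_set[of gadget_labels S] gadget_verts_subset_labels[of d]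
  by (simp add: gadget_labels_def Int_absorb2)

lemma gadget_independent_card_le:
  assumes "d \<in> {1,2,3}" "S \<subseteq> gadget_verts d" "\<forall>i\<in>S. \<forall>j\<in>S. \<not> gadget_adj d t i j"
  shows "card S \<le> 4 - d"
proof -
  have "int (card S) = (\<Sum>i\<leftarrow>gadget_labels. of_bool (i \<in> S))"
    using assms(2) by (rule of_nat_card_gadget_subset)
  also have "\<dots> \<le> 4 - int d"
    using assms by (intro gadget_independent_bound) (auto simp: gadget_adj_def)
  finally show ?thesis by simp
qed

text \<open>Here \<open>X\<close> stands for the attachment vertices whose neighbour in the adjacent gadget
  lies in the dissociation set.\<close>

definition attach_charge :: "nat set \<Rightarrow> nat set \<Rightarrow> nat \<Rightarrow> int" where
  "attach_charge S X i = (if i \<notin> S then -1 else if i \<in> X then 0 else 1)"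

lemma attach_charge_eq: "attach_charge S X i = 2 * of_bool (i \<in> S) - of_bool (i \<in> S \<and> i \<in> X) - 1"
  by (simp add: attach_charge_def)

lemma gadget_dissociation_charge_bound:
  assumes "d \<in> {1,2,3}" "S \<subseteq> gadget_verts d" "X \<subseteq> attach_verts d"
    and diss: "\<forall>i\<in>S. card {j\<in>S. gadget_adj d t i j} + of_bool (i \<in> X) \<le> 1"
  shows "3 * int (card S) \<le> 5 * (4 - int d) + (\<Sum>i\<in>attach_verts d. attach_charge S X i)"
proof -
  have nbrs: "\<forall>i\<in>set gadget_labels. i \<in> S \<longrightarrow>
      (\<Sum>j\<leftarrow>gadget_nbrs d t i. of_bool (j \<in> S)) + of_bool (i \<in> X) \<le> (1::int)"
  proof (intro ballI impI)
    fix i assume "i \<in> S"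
    have "{j\<in>S. gadget_adj d t i j} = S \<inter> set (gadget_nbrs d t i)"
      by (auto simp: gadget_adj_iff_nbrs)
    moreover have "distinct (gadget_nbrs d t i)"
      using distinct_gadget_nbrs assms(1,2) \<open>i \<in> S\<close> by blast
    ultimately have "int (card {j\<in>S. gadget_adj d t i j}) = (\<Sum>j\<leftarrow>gadget_nbrs d t i. of_bool (j \<in> S))"
      by (simp add: of_nat_card_Int_set)
    moreover have "int (card {j\<in>S. gadget_adj d t i j}) + of_bool (i \<in> X) \<le> 1"
      using diss \<open>i \<in> S\<close> by (cases "i \<in> X") auto
    ultimately show "(\<Sum>j\<leftarrow>gadget_nbrs d t i. of_bool (j \<in> S)) + of_bool (i \<in> X) \<le> (1::int)"
      by simp
  qed
  have "3 * int (card S) = 3 * (\<Sum>i\<leftarrow>gadget_labels. of_bool (i \<in> S))"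
    using assms(2) by (simp add: of_nat_card_gadget_subset)
  also have "\<dots> \<le> 5 * (4 - int d) + (\<Sum>i\<in>attach_verts d. 2 * of_bool (i \<in> S) - of_bool (i \<in> S \<and> i \<in> X) - 1)"
    by (rule gadget_dissociation_bound[OF assms(1) _ _ nbrs]) (use assms(2,3) in auto)
  finally show ?thesis
    unfolding attach_charge_eq .
qed

definition gadget_indep :: "nat \<Rightarrow> nat set" where
  "gadget_indep d = (if d = 1 then {1, 2, 5} else {0, 1})"

lemma gadget_indep:
  assumes "d \<in> {1,2}"
  shows "gadget_indep d \<subseteq> gadget_verts d - attach_verts d" "card (gadget_indep d) = 4 - d"
    "\<forall>i\<in>gadget_indep d. \<forall>j\<in>gadget_indep d. \<not> gadget_adj d t i j"
  using assms by (cases t; auto simp: gadget_indep_def gadget_verts_def attach_verts_def gadget_adj_def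
    gadget_edge_list_def)+

definition gadget_core :: "nat \<Rightarrow> nat set" where
  "gadget_core d = (if d = 1 then {3, 4, 6, 7} else if d = 2 then {2, 3} else {})"

lemma gadget_core_subset: "gadget_core d \<subseteq> gadget_verts d - attach_verts d"
  by (auto simp: gadget_core_def gadget_verts_def attach_verts_def)

lemma card_gadget_core: "d \<in> {1,2,3} \<Longrightarrow> card (gadget_core d) = 6 - 2 * d"
  by (auto simp: gadget_core_def)

text \<open>Adding to the core one attachment vertex, or two when the gadget is not a leaf gadget,
  gives a dissociation set of the gadget; in the first case the attachment vertex is even
  isolated in it, so that its neighbour across the edge of \<open>H\<close> may be in the set as well.\<close>

lemma gadget_core_dissociation:
  assumes "d \<in> {1,2,3}" "A \<subseteq> attach_verts d" "card A = (if m then 1 else 2)" "\<not> m \<Longrightarrow> d \<noteq> 1"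
  shows "\<forall>i\<in>gadget_core d \<union> A.
    card {j\<in>gadget_core d \<union> A. gadget_adj d t i j} + of_bool (m \<and> i \<in> A) \<le> 1"
proof -
  consider "d = 1" "m" "A = {0}" | "d = 2" "m" "A = {4} \<or> A = {5}" | "d = 2" "\<not> m" "A = {4, 5}"
    | "d = 3" "m" "A = {0} \<or> A = {1} \<or> A = {2}" | "d = 3" "\<not> m" "A = {0, 1} \<or> A = {0, 2} \<or> A = {1, 2}"
    using assms by (auto simp: attach_verts_def card_1_singleton_iff card_2_iff split: if_splits)
  then show ?thesis
    unfolding Collect_gadget_adj
    by cases ((elim disjE)?; cases t; simp add: gadget_core_def gadget_nbrs_def gadget_edge_list_def)+
qed

section \<open>The multigraph \<open>H\<close>\<close>

text \<open>The orientation of \<open>H - M\<close> is given by the tail of each edge.\<close>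

locale Hk_construction =
  fixes k :: nat and V :: "'v set" and E :: "'e set" and ends :: "'e \<Rightarrow> 'v set"
    and att :: "'v \<Rightarrow> 'e \<Rightarrow> nat" and gtype :: "'v \<Rightarrow> bool"
    and M :: "'e set" and tail :: "'e \<Rightarrow> 'v"
  assumes k_pos: "k > 0"
    and H_multigraph: "multigraph V E ends"
    and H_connected: "m_connected V E ends"
    and H_max_deg: "\<forall>v\<in>V. mdeg E ends v \<le> 3"
    and H_degree_count: "3 * ncount V E ends 1 + 2 * ncount V E ends 2 + ncount V E ends 3 = 6 * k"
    and M_subset: "M \<subseteq> E"
    and M_disjoint: "\<forall>e\<in>M. \<forall>e'\<in>M. e \<noteq> e' \<longrightarrow> ends e \<inter> ends e' = {}"
    and card_M: "card M = k"
    and M_covers_leaves: "\<forall>v\<in>V. mdeg E ends v = 1 \<longrightarrow> v \<in> \<Union>(ends ` M)"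
    and tail_in_ends: "\<forall>e\<in>E - M. tail e \<in> ends e"
    and outdeg_unmatched: "\<forall>v\<in>V - \<Union>(ends ` M). card {e\<in>E - M. tail e = v} = 2"
    and att_valid: "valid_attach V E ends att"
begin

abbreviation "deg w \<equiv> mdeg E ends w"
abbreviation "matched \<equiv> \<Union>(ends ` M)"
abbreviation "outdeg v \<equiv> card {e\<in>E - M. tail e = v}"
abbreviation "G_verts \<equiv> GV V E ends"
abbreviation "G_adj \<equiv> GA V E ends att gtype"

definition incident :: "'v \<Rightarrow> 'e set" where
  "incident w = {e\<in>E. w \<in> ends e}"

definition other :: "'e \<Rightarrow> 'v \<Rightarrow> 'v" where
  "other e w = (THE v. v \<in> ends e \<and> v \<noteq> w)"

lemma finite_V: "finite V" and finite_E: "finite E"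
  using H_multigraph by (auto simp: multigraph_def)

lemma ends_subset: "e \<in> E \<Longrightarrow> ends e \<subseteq> V"
  using H_multigraph by (auto simp: multigraph_def)

lemma card_ends: "e \<in> E \<Longrightarrow> card (ends e) = 2"
  using H_multigraph by (auto simp: multigraph_def)

lemma finite_ends: "e \<in> E \<Longrightarrow> finite (ends e)"
  using card_ends by (metis card.infinite zero_neq_numeral)

lemma incident_iff [simp]: "e \<in> incident w \<longleftrightarrow> e \<in> E \<and> w \<in> ends e"
  by (simp add: incident_def)

lemma finite_incident: "finite (incident w)"
  using finite_E by (simp add: incident_def)

lemma deg_eq_card_incident: "deg w = card (incident w)"
  by (simp add: mdeg_def incident_def)

lemma other:
  assumes "e \<in> E" "w \<in> ends e"
  shows ends_eq_other: "ends e = {w, other e w}" and other_neq: "other e w \<noteq> w"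
    and other_in_V: "other e w \<in> V"
proof -
  obtain a b where ab: "ends e = {a, b}" "a \<noteq> b"
    using card_ends[OF assms(1)] by (auto simp: card_2_iff)
  then have "\<exists>!v. v \<in> ends e \<and> v \<noteq> w"
    using assms(2) by auto
  then have "other e w \<in> ends e \<and> other e w \<noteq> w"
    unfolding other_def by (rule theI')
  then show "ends e = {w, other e w}" "other e w \<noteq> w" "other e w \<in> V"
    using ab assms ends_subset by auto
qed

lemma other_eqI:
  assumes "e \<in> E" "ends e = {w, v}" "v \<noteq> w"
  shows "other e w = v"
  using ends_eq_other[OF assms(1)] other_neq[OF assms(1)] assms(2,3) by (metis doubleton_eq_iff insertI1)

lemma other_other:
  assumes "e \<in> E" "w \<in> ends e"
  shows "other e (other e w) = w"
  using other_eqI[OF assms(1)] ends_eq_other[OF assms] other_neq[OF assms] by (metis insert_commute)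

lemma att_bij: "w \<in> V \<Longrightarrow> bij_betw (att w) (incident w) (attach_verts (deg w))"
  using att_valid by (simp add: valid_attach_def incident_def)

lemma att_in_attach_verts: "w \<in> V \<Longrightarrow> e \<in> incident w \<Longrightarrow> att w e \<in> attach_verts (deg w)"
  using att_bij bij_betwE by blast

lemma att_inj: "w \<in> V \<Longrightarrow> e \<in> incident w \<Longrightarrow> e' \<in> incident w \<Longrightarrow> att w e = att w e' \<Longrightarrow> e = e'"
  using att_bij[of w] by (auto simp: bij_betw_def inj_on_def)

lemma att_surj: "w \<in> V \<Longrightarrow> i \<in> attach_verts (deg w) \<Longrightarrow> \<exists>e\<in>incident w. att w e = i"
  using att_bij[of w] unfolding bij_betw_def by (metis imageE)

text \<open>A vertex of degree \<open>0\<close> would be all of \<open>H\<close>, which contradicts \<open>6k > 0\<close>.\<close>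

lemma deg_in_123: assumes "w \<in> V" shows "deg w \<in> {1,2,3}"
proof -
  have "deg w \<noteq> 0"
  proof
    assume deg0: "deg w = 0"
    then have no_edge: "\<forall>e\<in>E. w \<notin> ends e"
      using finite_incident by (auto simp: deg_eq_card_incident)
    have "V = {w}"
    proof
      show "V \<subseteq> {w}"
      proof
        fix v assume "v \<in> V"
        with H_connected assms have "(\<lambda>x y. \<exists>e\<in>E. ends e = {x, y})\<^sup>*\<^sup>* w v"
          by (simp add: m_connected_def)
        then show "v \<in> {w}"
          using no_edge by (cases rule: converse_rtranclpE) auto
      qed
    qed (use assms in simp)
    then have "ncount V E ends d = 0" if "d > 0" for d
      using deg0 that by (auto simp: ncount_def)
    with H_degree_count k_pos show False
      by simp
  qed
  then show ?thesis
    using H_max_deg assms by force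
qed

lemma sum_over_degrees:
  "(\<Sum>w\<in>V. f (deg w)) = (\<Sum>d\<in>{1,2,3}. of_nat (ncount V E ends d) * (f d :: 'a::comm_semiring_1))"
proof -
  have "(\<Sum>w\<in>V. f (deg w)) = (\<Sum>d\<in>{1,2,3}. \<Sum>w\<in>{w\<in>V. deg w = d}. f (deg w))"
    using finite_V deg_in_123 by (intro sum.group[symmetric]) auto
  also have "\<dots> = (\<Sum>d\<in>{1,2,3}. of_nat (ncount V E ends d) * f d)"
    by (intro sum.cong refl) (simp add: ncount_def)
  finally show ?thesis .
qed

lemma sum_weights: "(\<Sum>w\<in>V. 4 - int (deg w)) = 6 * int k"
  using sum_over_degrees[of "\<lambda>d. 4 - int d"] arg_cong[OF H_degree_count, of int] by simp

lemma card_V: "card V = ncount V E ends 1 + ncount V E ends 2 + ncount V E ends 3"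
  using sum_over_degrees[of "\<lambda>_. 1 :: nat"] by simp

lemma sum_incident_swap: "(\<Sum>w\<in>V. \<Sum>e\<in>incident w. f w e) = (\<Sum>e\<in>E. \<Sum>w\<in>ends e. f w e)"
proof -
  have "(\<Sum>w\<in>V. \<Sum>e\<in>incident w. f w e) = (\<Sum>e\<in>E. \<Sum>w\<in>{w. w \<in> V \<and> w \<in> ends e}. f w e)"
    unfolding incident_def by (rule sum.swap_restrict[OF finite_V finite_E])
  also have "\<dots> = (\<Sum>e\<in>E. \<Sum>w\<in>ends e. f w e)"
  proof (rule sum.cong)
    fix e assume "e \<in> E"
    then have "{w. w \<in> V \<and> w \<in> ends e} = ends e"
      using ends_subset by auto
    then show "(\<Sum>w\<in>{w. w \<in> V \<and> w \<in> ends e}. f w e) = (\<Sum>w\<in>ends e. f w e)"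
      by simp
  qed simp
  finally show ?thesis .
qed

lemma handshake: "(\<Sum>v\<in>V. deg v) = 2 * card E"
proof -
  have "(\<Sum>v\<in>V. deg v) = (\<Sum>v\<in>V. \<Sum>e\<in>incident v. 1)"
    by (simp add: deg_eq_card_incident)
  also have "\<dots> = (\<Sum>e\<in>E. \<Sum>v\<in>ends e. 1)"
    by (rule sum_incident_swap)
  also have "\<dots> = (\<Sum>e\<in>E. 2)"
    using card_ends by simp
  finally show ?thesis
    by simp
qed

lemma matched_subset: "matched \<subseteq> V"
  using M_subset ends_subset by blast

lemma finite_matched: "finite matched"
  using matched_subset finite_V by (rule finite_subset)

lemma matching_edge_unique: "e \<in> M \<Longrightarrow> e' \<in> M \<Longrightarrow> v \<in> ends e \<Longrightarrow> v \<in> ends e' \<Longrightarrow> e = e'"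
  using M_disjoint by blast

lemma card_matched: "card matched = 2 * k"
proof -
  have "card matched = (\<Sum>e\<in>M. card (ends e))"
    using M_subset finite_E M_disjoint finite_ends by (intro card_UN_disjoint) (auto intro: finite_subset)
  also have "\<dots> = (\<Sum>e\<in>M. 2)"
    using M_subset card_ends by (intro sum.cong) auto
  finally show ?thesis
    using card_M by simp
qed

lemma card_E_minus_M: "card (E - M) = (\<Sum>v\<in>V. outdeg v)"
proof -
  have "card (E - M) = card (\<Union>v\<in>V. {e\<in>E - M. tail e = v})"
    using tail_in_ends ends_subset by (intro arg_cong[where f = card]) fastforce
  also have "\<dots> = (\<Sum>v\<in>V. outdeg v)"
    using finite_V finite_E by (intro card_UN_disjoint) auto
  finally show ?thesis .
qed

text \<open>The degree condition \<open>3n\<^sub>1 + 2n\<^sub>2 + n\<^sub>3 = 6k\<close> says exactly that the out-degrees of the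
  unmatched vertices already account for all edges of \<open>H - M\<close>.\<close>

lemma outdeg_matched: assumes "v \<in> matched" shows "{e\<in>E - M. tail e = v} = {}"
proof -
  have "(\<Sum>v\<in>V. outdeg v) = (\<Sum>v\<in>V - matched. outdeg v) + (\<Sum>v\<in>matched. outdeg v)"
    using sum.subset_diff[OF matched_subset finite_V] by simp
  also have "(\<Sum>v\<in>V - matched. outdeg v) = 2 * card (V - matched)"
    using outdeg_unmatched by simp
  finally have "card (E - M) = 2 * card (V - matched) + (\<Sum>v\<in>matched. outdeg v)"
    using card_E_minus_M by simp
  moreover have "card (E - M) + k = card E"
    using card_Diff_subset[OF _ M_subset] card_mono[OF finite_E M_subset] finite_subset[OF M_subset finite_E]
      card_M by simp
  moreover have "card (V - matched) + 2 * k = card V"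
    using card_Diff_subset[OF finite_matched matched_subset] card_mono[OF finite_V matched_subset]
      card_matched by simp
  moreover have "2 * card E = ncount V E ends 1 + 2 * ncount V E ends 2 + 3 * ncount V E ends 3"
    using sum_over_degrees[of "\<lambda>d. d"] handshake by simp
  ultimately have "(\<Sum>v\<in>matched. outdeg v) = 0"
    using card_V H_degree_count by linarith
  then have "\<forall>v\<in>matched. outdeg v = 0"
    by (simp only: sum_eq_0_iff[OF finite_matched])
  then have "outdeg v = 0"
    using assms by blast
  then show ?thesis
    using finite_E by simp
qed

lemma exists_entering_edge:
  assumes "w \<in> V" "deg w = 3"
  shows "\<exists>e. e \<in> incident w \<and> e \<notin> M \<and> tail e \<noteq> w"
proof (cases "w \<in> matched")
  case True
  have "card (incident w \<inter> M) \<le> 1"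
    using finite_incident matching_edge_unique by (auto simp: card_le_Suc0_iff_eq)
  then have "incident w \<inter> M \<noteq> incident w"
    using assms deg_eq_card_incident by auto
  then obtain e where "e \<in> incident w" "e \<notin> M"
    by blast
  then show ?thesis
    using outdeg_matched[OF True] by auto
next
  case False
  have "card {e\<in>E - M. tail e = w} < card (incident w)"
    using outdeg_unmatched assms False deg_eq_card_incident by simp
  then have "incident w \<noteq> {e\<in>E - M. tail e = w}"
    by auto
  moreover have "{e\<in>E - M. tail e = w} \<subseteq> incident w"
    using tail_in_ends by auto
  ultimately obtain e where "e \<in> incident w" "e \<notin> {e\<in>E - M. tail e = w}"
    by blast
  then show ?thesis
    using False by auto
qed

section \<open>The graph \<open>G\<close>\<close>

lemma G_verts_iff: "(w, i) \<in> G_verts \<longleftrightarrow> w \<in> V \<and> i \<in> gadget_verts (deg w)"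
  by (simp add: GV_def)

lemma finite_G_verts: "finite G_verts"
proof -
  have "G_verts \<subseteq> V \<times> set gadget_labels"
    using gadget_verts_subset_labels by (auto simp: GV_def)
  then show ?thesis
    using finite_V by (auto intro: finite_subset)
qed

lemma att_in_G_verts: "w \<in> V \<Longrightarrow> e \<in> incident w \<Longrightarrow> (w, att w e) \<in> G_verts"
  using att_in_attach_verts attach_verts_subset by (auto simp: GV_def)

definition across :: "'v \<Rightarrow> nat \<Rightarrow> ('v \<times> nat) set" where
  "across w i = {(other e w, att (other e w) e) | e. e \<in> incident w \<and> att w e = i}"

lemma across_other_gadget:
  assumes "w \<in> V" "q \<in> across w i"
  shows "fst q \<noteq> w" "q \<in> G_verts"
proof -
  obtain e where e: "e \<in> E" "w \<in> ends e" "q = (other e w, att (other e w) e)"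
    using assms(2) by (auto simp: across_def)
  show "fst q \<noteq> w"
    using e other_neq by simp
  have "e \<in> incident (other e w)"
    using e ends_eq_other by auto
  then show "q \<in> G_verts"
    using e att_in_G_verts other_in_V by simp
qed

lemma across_att: "w \<in> V \<Longrightarrow> e \<in> incident w \<Longrightarrow> across w (att w e) = {(other e w, att (other e w) e)}"
  by (auto simp: across_def dest: att_inj)

lemma card_across:
  assumes "w \<in> V"
  shows "card (across w i) = of_bool (i \<in> attach_verts (deg w))"
proof (cases "i \<in> attach_verts (deg w)")
  case True
  then obtain e where "e \<in> incident w" "att w e = i"
    using att_surj assms by blast
  then show ?thesis
    using across_att assms True by auto
next
  case False
  then have "across w i = {}"
    using att_in_attach_verts assms by (auto simp: across_def)
  then show ?thesis
    using False by simp
qed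

lemma G_adj_iff:
  assumes "w \<in> V"
  shows "G_adj (w, i) q \<longleftrightarrow> (fst q = w \<and> gadget_adj (deg w) (gtype w) i (snd q)) \<or> q \<in> across w i"
proof -
  have "(\<exists>e\<in>E. ends e = {w, fst q} \<and> w \<noteq> fst q \<and> att w e = i \<and> att (fst q) e = snd q)
      \<longleftrightarrow> q \<in> across w i"
  proof
    assume "\<exists>e\<in>E. ends e = {w, fst q} \<and> w \<noteq> fst q \<and> att w e = i \<and> att (fst q) e = snd q"
    then obtain e where e: "e \<in> E" "ends e = {w, fst q}" "w \<noteq> fst q" "att w e = i" "att (fst q) e = snd q"
      by blast
    then have "other e w = fst q"
      by (intro other_eqI) auto
    with e show "q \<in> across w i"
      unfolding across_def by (intro CollectI exI[of _ e]) (auto simp: prod_eq_iff)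
  next
    assume "q \<in> across w i"
    then obtain e where e: "e \<in> E" "w \<in> ends e" "att w e = i" "q = (other e w, att (other e w) e)"
      by (auto simp: across_def)
    then show "\<exists>e\<in>E. ends e = {w, fst q} \<and> w \<noteq> fst q \<and> att w e = i \<and> att (fst q) e = snd q"
      using ends_eq_other[OF e(1,2)] other_neq[OF e(1,2)] by (intro bexI[of _ e]) auto
  qed
  then show ?thesis
    by (auto simp: GA_def)
qed

lemma G_nbrs:
  assumes "w \<in> V"
  shows "{q\<in>G_verts. G_adj (w, i) q} = Pair w ` set (gadget_nbrs (deg w) (gtype w) i) \<union> across w i"
proof (intro equalityI subsetI)
  fix q assume "q \<in> {q\<in>G_verts. G_adj (w, i) q}"
  then show "q \<in> Pair w ` set (gadget_nbrs (deg w) (gtype w) i) \<union> across w i"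
    using G_adj_iff[OF assms] by (auto simp: gadget_adj_iff_nbrs image_iff prod_eq_iff)
next
  fix q assume q: "q \<in> Pair w ` set (gadget_nbrs (deg w) (gtype w) i) \<union> across w i"
  show "q \<in> {q\<in>G_verts. G_adj (w, i) q}"
  proof (cases "q \<in> across w i")
    case True
    then show ?thesis
      using across_other_gadget[OF assms] G_adj_iff[OF assms] by auto
  next
    case False
    then obtain j where "q = (w, j)" "gadget_adj (deg w) (gtype w) i j"
      using q by (auto simp: gadget_adj_iff_nbrs)
    then show ?thesis
      using gadget_adj_in_verts assms G_adj_iff[OF assms] by (auto simp: GV_def)
  qed
qed

lemma G_cubic: "g_cubic G_verts G_adj"
  unfolding g_cubic_def
proof
  fix p assume "p \<in> G_verts"
  then obtain w i where p: "p = (w, i)" "w \<in> V" "i \<in> gadget_verts (deg w)"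
    by (auto simp: GV_def)
  let ?inner = "Pair w ` set (gadget_nbrs (deg w) (gtype w) i)"
  have "?inner \<inter> across w i = {}"
    using across_other_gadget(1)[OF p(2)] by force
  moreover have "across w i \<subseteq> G_verts"
    using across_other_gadget(2)[OF p(2)] by blast
  then have "finite (across w i)"
    using finite_G_verts by (rule finite_subset)
  ultimately have "card (?inner \<union> across w i) = card ?inner + card (across w i)"
    by (intro card_Un_disjoint) auto
  then have "card {q\<in>G_verts. G_adj p q} = card ?inner + card (across w i)"
    using G_nbrs[OF p(2)] p(1) by simp
  also have "\<dots> = length (gadget_nbrs (deg w) (gtype w) i) + of_bool (i \<in> attach_verts (deg w))"
    using distinct_gadget_nbrs[OF deg_in_123 p(3)] p(2)
    by (simp add: card_image inj_on_def distinct_card card_across)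
  also have "\<dots> = 3"
    using gadget_degree deg_in_123 p by blast
  finally show "card {q\<in>G_verts. G_adj p q} = 3" .
qed

abbreviation G_step :: "'v \<times> nat \<Rightarrow> 'v \<times> nat \<Rightarrow> bool" where
  "G_step p q \<equiv> p \<in> G_verts \<and> q \<in> G_verts \<and> G_adj p q"

lemma G_adj_sym: "G_adj p q \<Longrightarrow> G_adj q p"
  by (auto simp: GA_def gadget_adj_sym insert_commute)

lemma G_step_rtranclp_sym: "G_step\<^sup>*\<^sup>* p q \<Longrightarrow> G_step\<^sup>*\<^sup>* q p"
proof -
  have "symp G_step"
    by (auto intro!: sympI G_adj_sym)
  then show "G_step\<^sup>*\<^sup>* p q \<Longrightarrow> G_step\<^sup>*\<^sup>* q p"
    by (rule sympD[OF symp_rtranclp])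
qed

lemma G_step_in_gadget:
  assumes "w \<in> V" "i \<in> gadget_verts (deg w)"
  shows "G_step\<^sup>*\<^sup>* (w, 0) (w, i)"
  using gadget_connected[OF deg_in_123[OF assms(1)] assms(2), of "gtype w"]
proof (induction rule: rtranclp_induct)
  case (step j l)
  then have "G_step (w, j) (w, l)"
    using gadget_adj_in_verts assms(1) by (auto simp: GV_def GA_def)
  with step.IH show ?case
    by (rule rtranclp.rtrancl_into_rtrancl)
qed simp

lemma G_step_across_edge:
  assumes "e \<in> E" "x \<in> ends e"
  shows "G_step (x, att x e) (other e x, att (other e x) e)"
proof -
  have x: "x \<in> V" "e \<in> incident x"
    using assms ends_subset by auto
  then have "(other e x, att (other e x) e) \<in> across x (att x e)"
    by (auto simp: across_def)
  then show ?thesis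
    using G_adj_iff[OF x(1)] att_in_G_verts[OF x] across_other_gadget[OF x(1)] by blast
qed

lemma G_step_along_H_path:
  assumes "(\<lambda>x y. \<exists>e\<in>E. ends e = {x, y})\<^sup>*\<^sup>* u v"
  shows "G_step\<^sup>*\<^sup>* (u, 0) (v, 0)"
  using assms
proof (induction rule: rtranclp_induct)
  case (step x y)
  then obtain e where e: "e \<in> E" "ends e = {x, y}"
    by blast
  have x: "x \<in> V" "x \<in> ends e" and y: "y \<in> V" "y \<in> ends e"
    using e ends_subset by auto
  have "x \<noteq> y"
    using card_ends[OF e(1)] e(2) by auto
  then have "other e x = y"
    using other_eqI[OF e] by simp
  have "att x e \<in> gadget_verts (deg x)" "att y e \<in> gadget_verts (deg y)"
    using att_in_attach_verts attach_verts_subset e(1) x y by auto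
  then have into_x: "G_step\<^sup>*\<^sup>* (x, 0) (x, att x e)" and out_of_y: "G_step\<^sup>*\<^sup>* (y, att y e) (y, 0)"
    using G_step_in_gadget x(1) y(1) G_step_rtranclp_sym by auto
  have "G_step (x, att x e) (y, att y e)"
    using G_step_across_edge[OF e(1) x(2)] \<open>other e x = y\<close> by simp
  with rtranclp_trans[OF step.IH into_x] have "G_step\<^sup>*\<^sup>* (u, 0) (y, att y e)"
    by (rule rtranclp.rtrancl_into_rtrancl)
  then show ?case
    using out_of_y by (rule rtranclp_trans)
qed simp

lemma G_connected: "g_connected G_verts G_adj"
  unfolding g_connected_def
proof
  obtain w where "w \<in> V"
    using H_connected by (auto simp: m_connected_def)
  then show "G_verts \<noteq> {}"
    using zero_in_gadget_verts deg_in_123 G_verts_iff by blast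
  show "\<forall>p\<in>G_verts. \<forall>q\<in>G_verts. G_step\<^sup>*\<^sup>* p q"
  proof (intro ballI)
    fix p q assume "p \<in> G_verts" "q \<in> G_verts"
    then obtain u i v j where p: "p = (u, i)" "u \<in> V" "i \<in> gadget_verts (deg u)"
      and q: "q = (v, j)" "v \<in> V" "j \<in> gadget_verts (deg v)"
      by (auto simp: GV_def)
    have "G_step\<^sup>*\<^sup>* (u, i) (u, 0)"
      using G_step_in_gadget[OF p(2,3)] by (rule G_step_rtranclp_sym)
    also have "G_step\<^sup>*\<^sup>* (u, 0) (v, 0)"
      using G_step_along_H_path H_connected p(2) q(2) by (simp add: m_connected_def)
    also have "G_step\<^sup>*\<^sup>* (v, 0) (v, j)"
      using G_step_in_gadget[OF q(2,3)] .
    finally show "G_step\<^sup>*\<^sup>* p q"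
      using p(1) q(1) by simp
  qed
qed

lemma card_eq_sum_fibres:
  assumes "S \<subseteq> G_verts"
  shows "card S = (\<Sum>w\<in>V. card {i. (w, i) \<in> S})"
proof -
  have "S = Sigma V (\<lambda>w. {i. (w, i) \<in> S})"
    using assms by (auto simp: GV_def)
  moreover have "finite {i. (w, i) \<in> S}" for w
    using assms finite_gadget_verts by (auto simp: GV_def intro: finite_subset)
  ultimately show ?thesis
    using finite_V by (metis card_SigmaI)
qed

section \<open>The independence number\<close>

lemma independent_card_le:
  assumes "independent_set G_verts G_adj S"
  shows "card S \<le> 6 * k"
proof -
  have S: "S \<subseteq> G_verts" "\<forall>p\<in>S. \<forall>q\<in>S. \<not> G_adj p q"
    using assms by (auto simp: independent_set_def)
  have "int (card S) = (\<Sum>w\<in>V. int (card {i. (w, i) \<in> S}))"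
    using card_eq_sum_fibres[OF S(1)] by simp
  also have "\<dots> \<le> (\<Sum>w\<in>V. 4 - int (deg w))"
  proof (rule sum_mono)
    fix w assume w: "w \<in> V"
    have "\<forall>i\<in>{i. (w, i) \<in> S}. \<forall>j\<in>{i. (w, i) \<in> S}. \<not> gadget_adj (deg w) (gtype w) i j"
    proof (intro ballI notI)
      fix i j assume "i \<in> {i. (w, i) \<in> S}" "j \<in> {i. (w, i) \<in> S}" "gadget_adj (deg w) (gtype w) i j"
      moreover from this(3) have "G_adj (w, i) (w, j)"
        by (simp add: GA_def)
      ultimately show False
        using S(2) by blast
    qed
    then have "card {i. (w, i) \<in> S} \<le> 4 - deg w"
      using S(1) deg_in_123[OF w] by (intro gadget_independent_card_le) (auto simp: GV_def)
    then show "int (card {i. (w, i) \<in> S}) \<le> 4 - int (deg w)"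
      using deg_in_123[OF w] by auto
  qed
  also have "\<dots> = 6 * int k"
    by (rule sum_weights)
  finally show ?thesis
    by simp
qed

definition entering :: "'v \<Rightarrow> 'e" where
  "entering w = (SOME e. e \<in> incident w \<and> e \<notin> M \<and> tail e \<noteq> w)"

lemma entering: "w \<in> V \<Longrightarrow> deg w = 3 \<Longrightarrow> entering w \<in> incident w \<and> entering w \<notin> M \<and> tail (entering w) \<noteq> w"
  unfolding entering_def by (rule someI_ex) (rule exists_entering_edge)

text \<open>Two chosen attachment vertices of triangles cannot be joined by an edge of \<open>H\<close>, since
  that edge would enter both of its ends.\<close>

definition indep_part :: "'v \<Rightarrow> nat set" where
  "indep_part w = (if deg w = 3 then {att w (entering w)} else gadget_indep (deg w))"

definition G_indep :: "('v \<times> nat) set" where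
  "G_indep = {(w, i). w \<in> V \<and> i \<in> indep_part w}"

lemma indep_part:
  assumes "w \<in> V"
  shows "indep_part w \<subseteq> gadget_verts (deg w)" "card (indep_part w) = 4 - deg w"
    "\<forall>i\<in>indep_part w. \<forall>j\<in>indep_part w. \<not> gadget_adj (deg w) (gtype w) i j"
    "\<forall>i\<in>indep_part w. i \<in> attach_verts (deg w) \<longrightarrow> deg w = 3 \<and> i = att w (entering w)"
proof -
  consider "deg w \<in> {1,2}" | "deg w = 3"
    using deg_in_123[OF assms] by blast
  then have "indep_part w \<subseteq> gadget_verts (deg w) \<and> card (indep_part w) = 4 - deg w \<and>
    (\<forall>i\<in>indep_part w. \<forall>j\<in>indep_part w. \<not> gadget_adj (deg w) (gtype w) i j) \<and>
    (\<forall>i\<in>indep_part w. i \<in> attach_verts (deg w) \<longrightarrow> deg w = 3 \<and> i = att w (entering w))"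
  proof cases
    case 1
    then show ?thesis
      using gadget_indep(1,2)[OF 1] gadget_indep(3)[OF 1, of "gtype w"] by (auto simp: indep_part_def)
  next
    case 2
    then have "att w (entering w) \<in> gadget_verts (deg w)"
      using att_in_attach_verts[OF assms] entering[OF assms] attach_verts_subset by blast
    then show ?thesis
      using 2 gadget_adj_irrefl by (auto simp: indep_part_def)
  qed
  then show "indep_part w \<subseteq> gadget_verts (deg w)" "card (indep_part w) = 4 - deg w"
    "\<forall>i\<in>indep_part w. \<forall>j\<in>indep_part w. \<not> gadget_adj (deg w) (gtype w) i j"
    "\<forall>i\<in>indep_part w. i \<in> attach_verts (deg w) \<longrightarrow> deg w = 3 \<and> i = att w (entering w)"
    by blast+
qed

lemma G_indep_subset: "G_indep \<subseteq> G_verts"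
  using indep_part(1) by (auto simp: G_indep_def GV_def)

lemma G_indep_independent: "independent_set G_verts G_adj G_indep"
  unfolding independent_set_def
proof (intro conjI ballI notI)
  show "G_indep \<subseteq> G_verts"
    by (rule G_indep_subset)
  fix p q assume "p \<in> G_indep" "q \<in> G_indep" "G_adj p q"
  then obtain w i w' j where p: "p = (w, i)" "w \<in> V" "i \<in> indep_part w"
    and q: "q = (w', j)" "w' \<in> V" "j \<in> indep_part w'"
    by (auto simp: G_indep_def)
  have "(w' = w \<and> gadget_adj (deg w) (gtype w) i j) \<or> q \<in> across w i"
    using \<open>G_adj p q\<close> G_adj_iff[OF p(2)] p(1) q(1) by simp
  then show False
  proof
    assume "w' = w \<and> gadget_adj (deg w) (gtype w) i j"
    then show False
      using indep_part(3)[OF p(2)] p(3) q(3) by blast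
  next
    assume "q \<in> across w i"
    then obtain e where e: "e \<in> E" "w \<in> ends e" "att w e = i" "w' = other e w" "j = att w' e"
      using q(1) by (auto simp: across_def)
    have "e \<in> incident w'"
      using e ends_eq_other by auto
    have "i \<in> attach_verts (deg w)"
      using att_in_attach_verts[OF p(2)] e by auto
    then have "deg w = 3" "e = entering w"
      using indep_part(4)[OF p(2)] p(3) e(1-3) entering[OF p(2)] att_inj[OF p(2)] by auto
    have "j \<in> attach_verts (deg w')"
      using att_in_attach_verts[OF q(2) \<open>e \<in> incident w'\<close>] e(5) by simp
    then have "deg w' = 3" "e = entering w'"
      using indep_part(4)[OF q(2)] q(3) e(5) \<open>e \<in> incident w'\<close> entering[OF q(2)] att_inj[OF q(2)] by auto
    have "tail e \<in> ends e" "tail e \<noteq> w" "tail e \<noteq> w'"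
      using tail_in_ends entering[OF p(2) \<open>deg w = 3\<close>] entering[OF q(2) \<open>deg w' = 3\<close>] e(1)
        \<open>e = entering w\<close> \<open>e = entering w'\<close> by auto
    then show False
      using ends_eq_other[OF e(1,2)] e(4) by auto
  qed
qed

lemma card_G_indep: "card G_indep = 6 * k"
proof -
  have "int (card G_indep) = (\<Sum>w\<in>V. int (card {i. (w, i) \<in> G_indep}))"
    using card_eq_sum_fibres[OF G_indep_subset] by simp
  also have "\<dots> = (\<Sum>w\<in>V. 4 - int (deg w))"
  proof (rule sum.cong)
    fix w assume w: "w \<in> V"
    then have "{i. (w, i) \<in> G_indep} = indep_part w"
      by (auto simp: G_indep_def)
    then show "int (card {i. (w, i) \<in> G_indep}) = 4 - int (deg w)"
      using indep_part(2)[OF w] deg_in_123[OF w] by auto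
  qed simp
  also have "\<dots> = 6 * int k"
    by (rule sum_weights)
  finally show ?thesis
    by simp
qed

lemma alpha_G: "alpha G_verts G_adj = 6 * k"
  unfolding alpha_def
  using finite_G_verts G_indep_independent card_G_indep independent_card_le
  by (intro Max_card_eqI) (auto simp: independent_set_def)

section \<open>The dissociation number\<close>

text \<open>The value of \<open>attach_charge\<close> at the attachment vertex of \<open>e\<close> in the gadget of \<open>w\<close>,
  written directly in terms of \<open>S\<close>.\<close>

definition edge_charge :: "('v \<times> nat) set \<Rightarrow> 'v \<Rightarrow> 'e \<Rightarrow> int" where
  "edge_charge S w e = (if (w, att w e) \<notin> S then -1
     else if (other e w, att (other e w) e) \<in> S then 0 else 1)"

lemma edge_charge_sum_nonpos:
  assumes "e \<in> E"
  shows "(\<Sum>w\<in>ends e. edge_charge S w e) \<le> 0"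
proof -
  obtain w where w: "w \<in> ends e"
    using card_ends[OF assms] by fastforce
  have "(\<Sum>w\<in>ends e. edge_charge S w e) = edge_charge S w e + edge_charge S (other e w) e"
    using ends_eq_other[OF assms w] other_neq[OF assms w] by simp
  then show ?thesis
    using other_other[OF assms w] by (auto simp: edge_charge_def)
qed

definition outer_in :: "('v \<times> nat) set \<Rightarrow> 'v \<Rightarrow> nat set" where
  "outer_in S w = att w ` {e\<in>incident w. (other e w, att (other e w) e) \<in> S}"

lemma att_in_outer_in_iff:
  "w \<in> V \<Longrightarrow> e \<in> incident w \<Longrightarrow> att w e \<in> outer_in S w \<longleftrightarrow> (other e w, att (other e w) e) \<in> S"
  by (auto simp: outer_in_def dest: att_inj)

lemma dissociation_set_in_gadget:
  assumes S: "dissociation_set G_verts G_adj S" and w: "w \<in> V" and i: "(w, i) \<in> S"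
  shows "card {j. (w, j) \<in> S \<and> gadget_adj (deg w) (gtype w) i j} + of_bool (i \<in> outer_in S w) \<le> 1"
proof -
  let ?N = "{q\<in>S. G_adj (w, i) q}"
  let ?inner = "Pair w ` {j. (w, j) \<in> S \<and> gadget_adj (deg w) (gtype w) i j}"
  have "card ?N \<le> 1"
    using S i by (auto simp: dissociation_set_def)
  have finite_N: "finite ?N"
    using S finite_G_verts by (auto simp: dissociation_set_def intro: finite_subset)
  have inner: "?inner \<subseteq> ?N"
    by (auto simp: GA_def)
  have card_inner: "card ?inner = card {j. (w, j) \<in> S \<and> gadget_adj (deg w) (gtype w) i j}"
    by (rule card_image) (auto simp: inj_on_def)
  show ?thesis
  proof (cases "i \<in> outer_in S w")
    case True
    then obtain e where e: "e \<in> incident w" "i = att w e" "(other e w, att (other e w) e) \<in> S"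
      by (auto simp: outer_in_def)
    let ?p = "(other e w, att (other e w) e)"
    have "?p \<in> across w i"
      using e by (auto simp: across_def)
    then have "?p \<in> ?N"
      using e(3) G_adj_iff[OF w] by auto
    have "other e w \<noteq> w"
      using other_neq[of e w] e(1) by simp
    then have "?p \<notin> ?inner"
      by auto
    have "insert ?p ?inner \<subseteq> ?N"
      using \<open>?p \<in> ?N\<close> inner by (rule insert_subsetI)
    then have "card (insert ?p ?inner) \<le> card ?N"
      by (rule card_mono[OF finite_N])
    then have "card (insert ?p ?inner) \<le> 1"
      using \<open>card ?N \<le> 1\<close> by linarith
    moreover have "finite ?inner"
      using finite_N inner by (rule finite_subset[rotated])
    ultimately show ?thesis
      using True card_inner \<open>?p \<notin> ?inner\<close> by simp
  next
    case False
    then show ?thesis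
      using card_mono[OF finite_N inner] \<open>card ?N \<le> 1\<close> card_inner by simp
  qed
qed

lemma gadget_charge_bound:
  assumes S: "dissociation_set G_verts G_adj S" and w: "w \<in> V"
  shows "3 * int (card {i. (w, i) \<in> S}) \<le> 5 * (4 - int (deg w)) + (\<Sum>e\<in>incident w. edge_charge S w e)"
proof -
  define Sw where "Sw = {i. (w, i) \<in> S}"
  have "3 * int (card Sw) \<le> 5 * (4 - int (deg w)) + (\<Sum>i\<in>attach_verts (deg w). attach_charge Sw (outer_in S w) i)"
  proof (rule gadget_dissociation_charge_bound[OF deg_in_123[OF w]])
    show "Sw \<subseteq> gadget_verts (deg w)"
      using S by (auto simp: Sw_def GV_def dissociation_set_def)
    show "outer_in S w \<subseteq> attach_verts (deg w)"
      using att_in_attach_verts[OF w] by (auto simp: outer_in_def)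
    show "\<forall>i\<in>Sw. card {j\<in>Sw. gadget_adj (deg w) (gtype w) i j} + of_bool (i \<in> outer_in S w) \<le> 1"
      using dissociation_set_in_gadget[OF S w] by (simp add: Sw_def)
  qed
  also have "(\<Sum>i\<in>attach_verts (deg w). attach_charge Sw (outer_in S w) i)
      = (\<Sum>e\<in>incident w. attach_charge Sw (outer_in S w) (att w e))"
    by (rule sum.reindex_bij_betw[symmetric, OF att_bij[OF w]])
  also have "\<dots> = (\<Sum>e\<in>incident w. edge_charge S w e)"
    using att_in_outer_in_iff[OF w]
    by (intro sum.cong) (auto simp: attach_charge_def edge_charge_def Sw_def)
  finally show ?thesis
    unfolding Sw_def .
qed

lemma dissociation_card_le:
  assumes "dissociation_set G_verts G_adj S"
  shows "card S \<le> 10 * k"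
proof -
  have "3 * int (card S) = (\<Sum>w\<in>V. 3 * int (card {i. (w, i) \<in> S}))"
    using card_eq_sum_fibres assms by (simp add: dissociation_set_def sum_distrib_left)
  also have "\<dots> \<le> (\<Sum>w\<in>V. 5 * (4 - int (deg w)) + (\<Sum>e\<in>incident w. edge_charge S w e))"
    using gadget_charge_bound[OF assms] by (rule sum_mono)
  also have "\<dots> = 5 * (\<Sum>w\<in>V. 4 - int (deg w)) + (\<Sum>w\<in>V. \<Sum>e\<in>incident w. edge_charge S w e)"
    by (simp add: sum.distrib sum_distrib_left)
  also have "\<dots> = 30 * int k + (\<Sum>w\<in>V. \<Sum>e\<in>incident w. edge_charge S w e)"
    by (simp add: sum_weights)
  also have "(\<Sum>w\<in>V. \<Sum>e\<in>incident w. edge_charge S w e) = (\<Sum>e\<in>E. \<Sum>w\<in>ends e. edge_charge S w e)"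
    by (rule sum_incident_swap)
  also have "\<dots> \<le> 0"
    using edge_charge_sum_nonpos by (rule sum_nonpos)
  finally show ?thesis
    by simp
qed

text \<open>An edge kept at both of its ends lies in \<open>M\<close>, since it has only one tail.\<close>

definition kept_edges :: "'v \<Rightarrow> 'e set" where
  "kept_edges w = (if w \<in> matched then {e\<in>M. w \<in> ends e} else {e\<in>E - M. tail e = w})"

definition diss_part :: "'v \<Rightarrow> nat set" where
  "diss_part w = gadget_core (deg w) \<union> att w ` kept_edges w"

definition G_diss :: "('v \<times> nat) set" where
  "G_diss = {(w, i). w \<in> V \<and> i \<in> diss_part w}"

lemma kept_edges_subset: "kept_edges w \<subseteq> incident w"
  using M_subset tail_in_ends by (auto simp: kept_edges_def)

lemma kept_edge_not_in_M: "e \<notin> M \<Longrightarrow> e \<in> kept_edges w \<Longrightarrow> w \<notin> matched \<and> tail e = w"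
  by (auto simp: kept_edges_def split: if_splits)

lemma card_kept_edges:
  assumes "w \<in> V"
  shows "card (kept_edges w) = (if w \<in> matched then 1 else 2)"
proof (cases "w \<in> matched")
  case True
  then obtain e where "e \<in> M" "w \<in> ends e"
    by blast
  then have "{e\<in>M. w \<in> ends e} = {e}"
    using matching_edge_unique by blast
  then show ?thesis
    using True by (simp add: kept_edges_def)
next
  case False
  then show ?thesis
    using outdeg_unmatched assms by (simp add: kept_edges_def)
qed

lemma att_kept_edges:
  assumes "w \<in> V"
  shows "att w ` kept_edges w \<subseteq> attach_verts (deg w)" "card (att w ` kept_edges w) = card (kept_edges w)"
proof -
  show "att w ` kept_edges w \<subseteq> attach_verts (deg w)"
    using att_in_attach_verts[OF assms] kept_edges_subset by blast
  have "inj_on (att w) (kept_edges w)"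
    using att_inj[OF assms] kept_edges_subset by (meson inj_onI subsetD)
  then show "card (att w ` kept_edges w) = card (kept_edges w)"
    by (rule card_image)
qed

lemma card_diss_part:
  assumes "w \<in> V"
  shows "card (diss_part w) = 6 - 2 * deg w + (if w \<in> matched then 1 else 2)"
proof -
  have "gadget_core (deg w) \<inter> att w ` kept_edges w = {}"
    using att_kept_edges(1)[OF assms] gadget_core_subset by blast
  moreover have "finite (gadget_core (deg w))" "finite (att w ` kept_edges w)"
    using gadget_core_subset att_kept_edges(1)[OF assms] attach_verts_subset finite_gadget_verts
    by (meson Diff_subset finite_subset)+
  ultimately have "card (diss_part w) = card (gadget_core (deg w)) + card (att w ` kept_edges w)"
    unfolding diss_part_def by (rule card_Un_disjoint[rotated 2])
  then show ?thesis
    using att_kept_edges(2)[OF assms] card_kept_edges[OF assms] card_gadget_core deg_in_123[OF assms]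
    by simp
qed

lemma G_diss_subset: "G_diss \<subseteq> G_verts"
  using gadget_core_subset att_kept_edges(1) attach_verts_subset
  by (fastforce simp: G_diss_def diss_part_def GV_def)

lemma att_in_G_diss_iff:
  assumes "e \<in> E" "v \<in> ends e"
  shows "(v, att v e) \<in> G_diss \<longleftrightarrow> e \<in> kept_edges v"
proof -
  have v: "v \<in> V" "e \<in> incident v"
    using assms ends_subset by auto
  have "att v e \<notin> gadget_core (deg v)"
    using att_in_attach_verts[OF v] gadget_core_subset by blast
  moreover have "att v e \<in> att v ` kept_edges v \<longleftrightarrow> e \<in> kept_edges v"
    using att_inj[OF v] kept_edges_subset by blast
  ultimately show ?thesis
    using v by (auto simp: G_diss_def diss_part_def)
qed

lemma card_across_G_diss:
  assumes w: "w \<in> V" and i: "i \<in> diss_part w"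
  shows "card (across w i \<inter> G_diss) \<le> of_bool (w \<in> matched \<and> i \<in> att w ` kept_edges w)"
proof (cases "across w i \<inter> G_diss = {}")
  case False
  then obtain q where q: "q \<in> across w i" "q \<in> G_diss"
    by blast
  then obtain e where e: "e \<in> E" "w \<in> ends e" "att w e = i" "q = (other e w, att (other e w) e)"
    by (auto simp: across_def)
  have other: "other e w \<in> ends e" "other e w \<noteq> w"
    using ends_eq_other[OF e(1,2)] other_neq[OF e(1,2)] by auto
  have "e \<in> kept_edges (other e w)"
    using att_in_G_diss_iff[OF e(1) other(1)] q(2) e(4) by simp
  have "i \<in> attach_verts (deg w)"
    using att_in_attach_verts[OF w] e by auto
  then have "i \<notin> gadget_core (deg w)"
    using gadget_core_subset by blast
  then have "i \<in> att w ` kept_edges w"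
    using i by (simp add: diss_part_def)
  then have "e \<in> kept_edges w"
    using att_in_G_diss_iff[OF e(1,2)] e(3) w i by (auto simp: G_diss_def)
  have "e \<in> M"
  proof (rule ccontr)
    assume "e \<notin> M"
    then have "tail e = w" "tail e = other e w"
      using kept_edge_not_in_M \<open>e \<in> kept_edges w\<close> \<open>e \<in> kept_edges (other e w)\<close> by blast+
    then show False
      using other(2) by simp
  qed
  then have "w \<in> matched"
    using e(2) by blast
  moreover have "across w i = {q}"
    using across_att[OF w] e by auto
  ultimately show ?thesis
    using \<open>i \<in> att w ` kept_edges w\<close> by (simp add: card_le_Suc0_iff_eq)
qed simp

lemma diss_part_dissociation:
  assumes w: "w \<in> V" and i: "i \<in> diss_part w"
  shows "card {j\<in>diss_part w. gadget_adj (deg w) (gtype w) i j}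
    + of_bool (w \<in> matched \<and> i \<in> att w ` kept_edges w) \<le> 1"
proof -
  have "card (att w ` kept_edges w) = (if w \<in> matched then 1 else 2)"
    using att_kept_edges(2)[OF w] card_kept_edges[OF w] by simp
  moreover have "w \<notin> matched \<Longrightarrow> deg w \<noteq> 1"
    using M_covers_leaves w by blast
  ultimately have "\<forall>i\<in>diss_part w. card {j\<in>diss_part w. gadget_adj (deg w) (gtype w) i j}
      + of_bool (w \<in> matched \<and> i \<in> att w ` kept_edges w) \<le> 1"
    unfolding diss_part_def
    by (rule gadget_core_dissociation[OF deg_in_123[OF w] att_kept_edges(1)[OF w]])
  then show ?thesis
    using i by blast
qed

lemma G_diss_dissociation: "dissociation_set G_verts G_adj G_diss"
  unfolding dissociation_set_def
proof (intro conjI ballI)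
  show "G_diss \<subseteq> G_verts"
    by (rule G_diss_subset)
  fix p assume "p \<in> G_diss"
  then obtain w i where p: "p = (w, i)" "w \<in> V" "i \<in> diss_part w"
    by (auto simp: G_diss_def)
  let ?I = "{j\<in>diss_part w. gadget_adj (deg w) (gtype w) i j}"
  have nbrs: "{q\<in>G_diss. G_adj p q} \<subseteq> Pair w ` ?I \<union> (across w i \<inter> G_diss)"
    using G_adj_iff[OF p(2)] p(1) by (auto simp: G_diss_def)
  have "?I \<subseteq> gadget_verts (deg w)"
    using gadget_adj_in_verts by blast
  then have finite_I: "finite ?I"
    using finite_gadget_verts by (rule finite_subset)
  have "card {q\<in>G_diss. G_adj p q} \<le> card (Pair w ` ?I \<union> (across w i \<inter> G_diss))"
    using finite_I finite_subset[OF G_diss_subset finite_G_verts] by (intro card_mono[OF _ nbrs]) auto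
  also have "\<dots> \<le> card (Pair w ` ?I) + card (across w i \<inter> G_diss)"
    by (rule card_Un_le)
  also have "\<dots> \<le> 1"
    using card_across_G_diss[OF p(2,3)] diss_part_dissociation[OF p(2,3)]
      card_image_le[OF finite_I, of "Pair w"] by linarith
  finally show "card {q\<in>G_diss. G_adj p q} \<le> 1" .
qed

lemma card_G_diss: "card G_diss = 10 * k"
proof -
  have "card G_diss = (\<Sum>w\<in>V. card {i. (w, i) \<in> G_diss})"
    using G_diss_subset by (rule card_eq_sum_fibres)
  also have "\<dots> = (\<Sum>w\<in>V. (6 - 2 * deg w) + (if w \<in> matched then 1 else 2))"
  proof (rule sum.cong)
    fix w assume w: "w \<in> V"
    then have "{i. (w, i) \<in> G_diss} = diss_part w"
      by (auto simp: G_diss_def)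
    then show "card {i. (w, i) \<in> G_diss} = (6 - 2 * deg w) + (if w \<in> matched then 1 else 2)"
      using card_diss_part[OF w] by simp
  qed simp
  also have "\<dots> = (\<Sum>w\<in>V. 6 - 2 * deg w) + (\<Sum>w\<in>V. if w \<in> matched then 1 else 2)"
    by (rule sum.distrib)
  also have "(\<Sum>w\<in>V. 6 - 2 * deg w) = 4 * ncount V E ends 1 + 2 * ncount V E ends 2"
    using sum_over_degrees[of "\<lambda>d. 6 - 2 * d"] by simp
  also have "(\<Sum>w\<in>V. if w \<in> matched then 1 else 2) = 2 * card (V - matched) + card matched"
    using sum.subset_diff[OF matched_subset finite_V, of "\<lambda>w. if w \<in> matched then 1 else 2 :: nat"]
    by simp
  finally have "card G_diss = 4 * ncount V E ends 1 + 2 * ncount V E ends 2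
      + (2 * card (V - matched) + card matched)" .
  moreover have "card (V - matched) + 2 * k = card V"
    using card_Diff_subset[OF finite_matched matched_subset] card_mono[OF finite_V matched_subset]
      card_matched by simp
  ultimately show ?thesis
    using card_V card_matched H_degree_count by linarith
qed

lemma diss_G: "diss G_verts G_adj = 10 * k"
  unfolding diss_def
  using finite_G_verts G_diss_dissociation card_G_diss dissociation_card_le
  by (intro Max_card_eqI) (auto simp: dissociation_set_def)

end

theorem lemma1:
  fixes k :: nat and V :: "'v set" and E :: "'e set" and ends :: "'e \<Rightarrow> 'v set"
    and att :: "'v \<Rightarrow> 'e \<Rightarrow> nat" and gtype :: "'v \<Rightarrow> bool"
  assumes "k > 0"
    and "in_Hk k V E ends"
    and "valid_attach V E ends att"
  shows "g_connected (GV V E ends) (GA V E ends att gtype)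
       \<and> g_cubic (GV V E ends) (GA V E ends att gtype)
       \<and> alpha (GV V E ends) (GA V E ends att gtype) = 6 * k
       \<and> diss (GV V E ends) (GA V E ends att gtype) = 10 * k"
proof -
  from assms(2) obtain M tail where "multigraph V E ends" "m_connected V E ends"
      "\<forall>v\<in>V. mdeg E ends v \<le> 3"
      "3 * ncount V E ends 1 + 2 * ncount V E ends 2 + ncount V E ends 3 = 6 * k"
      "induced_matching E ends M" "card M = k"
      "\<forall>v\<in>V. mdeg E ends v = 1 \<longrightarrow> v \<in> \<Union>(ends ` M)"
      "\<forall>e\<in>E - M. tail e \<in> ends e"
      "\<forall>v\<in>V - \<Union>(ends ` M). card {e\<in>E - M. tail e = v} = 2"
    unfolding in_Hk_def by blast
  then interpret Hk_construction k V E ends att gtype M tail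
    using assms(1,3) by unfold_locales (auto simp: induced_matching_def)
  show ?thesis
    using G_connected G_cubic alpha_G diss_G by blast
qed

end
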